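(* Let $G\in\Gamma$ be twin-free. (1) If some vertex of $G$ has degree at least $3$, then $G$ has an induced subgraph isomorphic to one of the three bipartite graphs with biadjacency matrices \[\begin{bmatrix}1&0&0\\1&1&1\\0&0&1\end{bmatrix},\qquad \begin{bmatrix}1&1&0\\1&1&1\\0&1&0\end{bmatrix},\qquad \begin{bmatrix}1&1&0\\1&1&1\\0&1&1\end{bmatrix}.\] (2) If $1<\|G\|<\eta_4$, where $\eta_4=\frac1{15}\sqrt{169+38\sqrt{19}}$, then every vertex of $G$ has degree at most $2$ and some vertex has degree exactly $2$ (i.e. $\deg(G)=2$).
   Context: $\Gamma$ is the collection of all bipartite graphs $G\subseteq R\times C$ with $|R|,|C|\in\{1,2,\dots\}\cup\{\aleph_0\}$; enumerating $R=\{r_i\}$, $C=\{c_j\}$, the biadjacency matrix $M(G)$ has $(i,j)$ entry $1$ if $(r_i,c_j)$ is an edge and $0$ otherwise. $\|G\|$ denotes the Schur norm $\|M(G)\|_\bullet=\sup\{\|M(G)\bullet X\|:\|X\|\le1\}$ (entrywise product, operator norm on $\ell^2$ spaces over $\mathbb F\in\{\mathbb R,\mathbb C\}$; possibly $\infty$). An induced subgraph of $G$ is $G\cap(R_0\times C_0)$ for $R_0\subseteq R$, $C_0\subseteq C$; graphs are considered up to isomorphism, where isomorphisms may swap the two sides of the bipartition. Two vertices are twins if they have the same neighbour sets; $G$ is twin-free if no two distinct vertices are twins. $\deg(G)$ is the maximum vertex degree. *)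

theory Defs
  imports "HOL-Analysis.Analysis" "HOL-Library.Extended_Nat"
begin

definition bip_graph :: "'a set \<Rightarrow> 'b set \<Rightarrow> ('a \<times> 'b) set \<Rightarrow> bool" where
  "bip_graph R C E \<longleftrightarrow> R \<noteq> {} \<and> C \<noteq> {} \<and> countable R \<and> countable C \<and> E \<subseteq> R \<times> C"

definition row_nbhd :: "('a \<times> 'b) set \<Rightarrow> 'a \<Rightarrow> 'b set" where
  "row_nbhd E r = {c. (r, c) \<in> E}"

definition col_nbhd :: "('a \<times> 'b) set \<Rightarrow> 'b \<Rightarrow> 'a set" where
  "col_nbhd E c = {r. (r, c) \<in> E}"

definition twin_free :: "'a set \<Rightarrow> 'b set \<Rightarrow> ('a \<times> 'b) set \<Rightarrow> bool" where
  "twin_free R C E \<longleftrightarrow>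
     (\<forall>r1\<in>R. \<forall>r2\<in>R. r1 \<noteq> r2 \<longrightarrow> row_nbhd E r1 \<noteq> row_nbhd E r2) \<and>
     (\<forall>c1\<in>C. \<forall>c2\<in>C. c1 \<noteq> c2 \<longrightarrow> col_nbhd E c1 \<noteq> col_nbhd E c2)"

definition ecard :: "'x set \<Rightarrow> enat" where
  "ecard S = (if finite S then enat (card S) else \<infinity>)"

definition degrees :: "'a set \<Rightarrow> 'b set \<Rightarrow> ('a \<times> 'b) set \<Rightarrow> enat set" where
  "degrees R C E = (\<lambda>r. ecard (row_nbhd E r)) ` R \<union> (\<lambda>c. ecard (col_nbhd E c)) ` C"

definition max_deg :: "'a set \<Rightarrow> 'b set \<Rightarrow> ('a \<times> 'b) set \<Rightarrow> enat" where
  "max_deg R C E = Sup (degrees R C E)"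

text \<open>Operator norm (on \<ell>^2 spaces) of a matrix A indexed by R \<times> C, as an extended real:
  supremum of the \<ell>^2-norm of (A x) restricted to finite row sets, over unit vectors x
  finitely supported in C. (Value \<infinity> when A is unbounded.)\<close>
definition mat_opnorm :: "'a set \<Rightarrow> 'b set \<Rightarrow> ('a \<Rightarrow> 'b \<Rightarrow> 'f::real_normed_field) \<Rightarrow> ereal" where
  "mat_opnorm R C A =
     (SUP p \<in> {(R0, C0, x). finite R0 \<and> R0 \<subseteq> R \<and> finite C0 \<and> C0 \<subseteq> C \<and>
                             (\<Sum>j\<in>C0. (norm (x j))\<^sup>2) \<le> (1::real)}.
        case p of (R0, C0, x) \<Rightarrow>
          ereal (sqrt (\<Sum>i\<in>R0. (norm (\<Sum>j\<in>C0. A i j * x j))\<^sup>2)))"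

definition schur_norm :: "'f::real_normed_field itself \<Rightarrow> 'a set \<Rightarrow> 'b set \<Rightarrow> ('a \<times> 'b) set \<Rightarrow> ereal" where
  "schur_norm _ R C E =
     (SUP X \<in> {X :: 'a \<Rightarrow> 'b \<Rightarrow> 'f. mat_opnorm R C X \<le> 1}.
        mat_opnorm R C (\<lambda>i j. if (i, j) \<in> E then X i j else 0))"

definition has_induced_copy :: "'a set \<Rightarrow> 'b set \<Rightarrow> ('a \<times> 'b) set \<Rightarrow> (nat \<Rightarrow> nat \<Rightarrow> bool) \<Rightarrow> bool" where
  "has_induced_copy R C E P \<longleftrightarrow>
     (\<exists>R0 C0. R0 \<subseteq> R \<and> C0 \<subseteq> C \<and>
       ((\<exists>f g. bij_betw f R0 {..<3} \<and> bij_betw g C0 {..<3} \<and>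
              (\<forall>r\<in>R0. \<forall>c\<in>C0. (r, c) \<in> E \<longleftrightarrow> P (f r) (g c))) \<or>
        (\<exists>f g. bij_betw f R0 {..<3} \<and> bij_betw g C0 {..<3} \<and>
              (\<forall>r\<in>R0. \<forall>c\<in>C0. (r, c) \<in> E \<longleftrightarrow> P (g c) (f r)))))"

definition H1 :: "nat \<Rightarrow> nat \<Rightarrow> bool" where
  "H1 i j = [[True, False, False], [True, True, True], [False, False, True]] ! i ! j"
definition H2 :: "nat \<Rightarrow> nat \<Rightarrow> bool" where
  "H2 i j = [[True, True, False], [True, True, True], [False, True, False]] ! i ! j"
definition H3 :: "nat \<Rightarrow> nat \<Rightarrow> bool" where
  "H3 i j = [[True, True, False], [True, True, True], [False, True, True]] ! i ! j"

definition eta4 :: real where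
  "eta4 = sqrt (169 + 38 * sqrt 19) / 15"

end

theory Submission
  imports Defs
begin

text \<open>
  Part (1): let a row r have three neighbours x, y, z. Any two columns are separated by some row,
  and one sorts rows by their trace on {x, y, z}. If some trace is a single column, a row
  separating the other two columns completes a copy of H1 or H2; otherwise the separating rows
  have traces of size two, and two of them sharing a column give H3 (together with r).

  Part (2): each of H1, H2, H3 has Schur norm at least eta4, witnessed by a 3\<times>3 orthogonal matrix N
  and a vector v with |(H \<circ> N) v| \<ge> eta4 |v|; transported onto an induced copy, N becomes a
  contraction on the whole graph, so \<parallel>G\<parallel> \<ge> eta4. Hence \<parallel>G\<parallel> < eta4 forces all degrees \<le> 2 by (1).
  If no degree were 2, E would be a partial matching, whose Schur multiples of contractions are
  contractions, so \<parallel>G\<parallel> \<le> 1.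
\<close>

lemma has_induced_copyI:
  assumes "set rs \<subseteq> R" "distinct rs" "length rs = 3"
    and "set cs \<subseteq> C" "distinct cs" "length cs = 3"
    and adj: "\<And>i j. i < 3 \<Longrightarrow> j < 3 \<Longrightarrow> (rs ! i, cs ! j) \<in> E \<longleftrightarrow> P i j"
  shows "has_induced_copy R C E P"
proof -
  have bij_rs: "bij_betw ((!) rs) {..<3} (set rs)" and bij_cs: "bij_betw ((!) cs) {..<3} (set cs)"
    using assms by (auto intro: bij_betw_nth)
  define f where "f = inv_into {..<3} ((!) rs)"
  define g where "g = inv_into {..<3} ((!) cs)"
  have bij_f: "bij_betw f (set rs) {..<3}" and bij_g: "bij_betw g (set cs) {..<3}"
    unfolding f_def g_def using bij_rs bij_cs by (auto intro: bij_betw_inv_into)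
  have "(r, c) \<in> E \<longleftrightarrow> P (f r) (g c)" if "r \<in> set rs" "c \<in> set cs" for r c
  proof -
    have "f r < 3" "g c < 3"
      using bij_betw_apply[OF bij_f] bij_betw_apply[OF bij_g] that by auto
    moreover have "rs ! f r = r" "cs ! g c = c"
      unfolding f_def g_def using bij_rs bij_cs that by (auto simp: bij_betw_def f_inv_into_f)
    ultimately show ?thesis using adj by metis
  qed
  then show ?thesis
    unfolding has_induced_copy_def
    by (intro exI[of _ "set rs"] exI[of _ "set cs"] conjI disjI1 exI[of _ f] exI[of _ g])
      (use assms(1,4) bij_f bij_g in auto)
qed

lemma has_induced_copy_converse:
  assumes "has_induced_copy C R (converse E) P"
  shows "has_induced_copy R C E P"
proof -
  obtain C0 R0 f g where "C0 \<subseteq> C" "R0 \<subseteq> R" "bij_betw f C0 {..<3}" "bij_betw g R0 {..<3}"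
    and "(\<forall>c\<in>C0. \<forall>r\<in>R0. (r, c) \<in> E \<longleftrightarrow> P (f c) (g r)) \<or>
         (\<forall>c\<in>C0. \<forall>r\<in>R0. (r, c) \<in> E \<longleftrightarrow> P (g r) (f c))"
    using assms unfolding has_induced_copy_def by auto
  then show ?thesis
    unfolding has_induced_copy_def
    by (intro exI[of _ R0] exI[of _ C0]) blast
qed

definition has_H123_copy :: "'a set \<Rightarrow> 'b set \<Rightarrow> ('a \<times> 'b) set \<Rightarrow> bool" where
  "has_H123_copy R C E \<longleftrightarrow>
     has_induced_copy R C E H1 \<or> has_induced_copy R C E H2 \<or> has_induced_copy R C E H3"

lemma has_H123_copy_converse:
  "has_H123_copy C R (converse E) \<Longrightarrow> has_H123_copy R C E"
  unfolding has_H123_copy_def using has_induced_copy_converse by blast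

lemma less_3_iff: "(i::nat) < 3 \<longleftrightarrow> i = 0 \<or> i = 1 \<or> i = 2"
  by auto

lemma has_H1_copyI:
  assumes "E \<subseteq> R \<times> C" "distinct [x, y, z]" "{x, y, z} \<subseteq> row_nbhd E r"
    and "row_nbhd E A \<inter> {x, y, z} = {x}" "row_nbhd E B \<inter> {x, y, z} = {z}"
  shows "has_H123_copy R C E"
  unfolding has_H123_copy_def
  by (rule disjI1, rule has_induced_copyI[of "[A, r, B]" _ "[x, y, z]"])
    (use assms in \<open>auto simp: less_3_iff H1_def row_nbhd_def\<close>)

lemma has_H2_copyI:
  assumes "E \<subseteq> R \<times> C" "distinct [x, y, z]" "{x, y, z} \<subseteq> row_nbhd E r"
    and "row_nbhd E A \<inter> {x, y, z} = {x, y}" "row_nbhd E B \<inter> {x, y, z} = {y}"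
  shows "has_H123_copy R C E"
  unfolding has_H123_copy_def
  by (rule disjI2, rule disjI1, rule has_induced_copyI[of "[A, r, B]" _ "[x, y, z]"])
    (use assms in \<open>auto simp: less_3_iff H2_def row_nbhd_def\<close>)

lemma has_H3_copyI:
  assumes "E \<subseteq> R \<times> C" "distinct [x, y, z]" "{x, y, z} \<subseteq> row_nbhd E r"
    and "row_nbhd E A \<inter> {x, y, z} = {x, y}" "row_nbhd E B \<inter> {x, y, z} = {y, z}"
  shows "has_H123_copy R C E"
  unfolding has_H123_copy_def
  by (rule disjI2, rule disjI2, rule has_induced_copyI[of "[A, r, B]" _ "[x, y, z]"])
    (use assms in \<open>auto simp: less_3_iff H3_def row_nbhd_def\<close>)

lemma separating_row:
  assumes "\<forall>c1\<in>C. \<forall>c2\<in>C. c1 \<noteq> c2 \<longrightarrow> col_nbhd E c1 \<noteq> col_nbhd E c2" "y \<in> C" "z \<in> C" "y \<noteq> z"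
  obtains B where "y \<in> row_nbhd E B" "z \<notin> row_nbhd E B"
    | B where "y \<notin> row_nbhd E B" "z \<in> row_nbhd E B"
  using assms unfolding col_nbhd_def row_nbhd_def by blast

lemma has_H123_copy_of_singleton_trace:
  assumes E: "E \<subseteq> R \<times> C"
    and twins: "\<forall>c1\<in>C. \<forall>c2\<in>C. c1 \<noteq> c2 \<longrightarrow> col_nbhd E c1 \<noteq> col_nbhd E c2"
    and xyz: "distinct [x, y, z]" "{x, y, z} \<subseteq> row_nbhd E r"
    and A: "row_nbhd E A \<inter> {x, y, z} = {x}"
  shows "has_H123_copy R C E"
proof -
  have separated: "has_H123_copy R C E"
    if uw: "{u, w} = {y, z}" "u \<noteq> w" and B: "u \<in> row_nbhd E B" "w \<notin> row_nbhd E B" for u w B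
  proof (cases "x \<in> row_nbhd E B")
    case True
    show ?thesis
      by (rule has_H2_copyI[of E R C u x w r B A]) (use assms uw B True in auto)
  next
    case False
    show ?thesis
      by (rule has_H1_copyI[of E R C x w u r A B]) (use assms uw B False in auto)
  qed
  have "y \<in> C" "z \<in> C" "y \<noteq> z"
    using E xyz by (auto simp: row_nbhd_def)
  then show ?thesis
    by (rule separating_row[OF twins]) (use separated in \<open>auto simp: insert_commute\<close>)
qed

lemma has_H123_copy_of_full_row:
  assumes E: "E \<subseteq> R \<times> C"
    and twins: "\<forall>c1\<in>C. \<forall>c2\<in>C. c1 \<noteq> c2 \<longrightarrow> col_nbhd E c1 \<noteq> col_nbhd E c2"
    and xyz: "distinct [x, y, z]" "{x, y, z} \<subseteq> row_nbhd E r"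
  shows "has_H123_copy R C E"
proof (cases "\<exists>A u. row_nbhd E A \<inter> {x, y, z} = {u}")
  case True
  then obtain A u where A: "row_nbhd E A \<inter> {x, y, z} = {u}"
    by blast
  then have "u = x \<or> u = y \<or> u = z"
    by auto
  then show ?thesis
    using has_H123_copy_of_singleton_trace[OF E twins, of x y z r A]
      has_H123_copy_of_singleton_trace[OF E twins, of y x z r A]
      has_H123_copy_of_singleton_trace[OF E twins, of z x y r A] xyz A
    by (auto simp: insert_commute)
next
  case False
  then have no_singleton: "row_nbhd E B \<inter> {x, y, z} \<noteq> {u}" for B u
    by blast
  have paired: "has_H123_copy R C E"
    if uvw: "{u, v, w} = {x, y, z}" "distinct [u, v, w]"
      and A: "u \<in> row_nbhd E A" "v \<notin> row_nbhd E A" for u v w A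
  proof -
    have trace_A: "row_nbhd E A \<inter> {x, y, z} = {u, w}"
      using no_singleton[of A u] uvw A by auto
    have "u \<in> C" "w \<in> C"
      using E xyz uvw by (auto simp: row_nbhd_def)
    then show ?thesis
    proof (rule separating_row[OF twins])
      fix B assume B: "u \<in> row_nbhd E B" "w \<notin> row_nbhd E B"
      then have "row_nbhd E B \<inter> {x, y, z} = {u, v}"
        using no_singleton[of B u] uvw by auto
      then show ?thesis
        by (intro has_H3_copyI[of E R C w u v r A B]) (use E xyz uvw trace_A in auto)
    next
      fix B assume B: "u \<notin> row_nbhd E B" "w \<in> row_nbhd E B"
      then have "row_nbhd E B \<inter> {x, y, z} = {w, v}"
        using no_singleton[of B w] uvw by auto
      then show ?thesis
        by (intro has_H3_copyI[of E R C u w v r A B]) (use E xyz uvw trace_A in auto)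
    qed (use uvw in auto)
  qed
  have "x \<in> C" "y \<in> C" "x \<noteq> y"
    using E xyz by (auto simp: row_nbhd_def)
  then show ?thesis
    by (rule separating_row[OF twins]) (use paired xyz in \<open>auto simp: insert_commute\<close>)
qed

lemma ecard_ge_3E:
  assumes "3 \<le> ecard S"
  obtains x y z where "distinct [x, y, z]" "{x, y, z} \<subseteq> S"
proof -
  have "\<exists>T\<subseteq>S. card T = 3"
  proof (cases "finite S")
    case True
    then show ?thesis
      using assms obtain_subset_with_card_n[of 3 S] by (auto simp: ecard_def)
  next
    case False
    then show ?thesis
      using infinite_arbitrarily_large by blast
  qed
  then show ?thesis
    using that unfolding card_3_iff by auto
qed

lemma has_H123_copy_if_degree_ge_3:
  assumes "bip_graph R C E" "twin_free R C E" "\<exists>d\<in>degrees R C E. 3 \<le> d"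
  shows "has_H123_copy R C E"
proof -
  have E: "E \<subseteq> R \<times> C"
    using assms(1) by (simp add: bip_graph_def)
  have col_twins: "\<forall>c1\<in>C. \<forall>c2\<in>C. c1 \<noteq> c2 \<longrightarrow> col_nbhd E c1 \<noteq> col_nbhd E c2"
    and row_twins: "\<forall>r1\<in>R. \<forall>r2\<in>R. r1 \<noteq> r2 \<longrightarrow> col_nbhd (converse E) r1 \<noteq> col_nbhd (converse E) r2"
    using assms(2) by (auto simp: twin_free_def row_nbhd_def col_nbhd_def)
  consider (row) r where "3 \<le> ecard (row_nbhd E r)" | (col) c where "3 \<le> ecard (col_nbhd E c)"
    using assms(3) unfolding degrees_def by blast
  then show ?thesis
  proof cases
    case row
    then obtain x y z where "distinct [x, y, z]" "{x, y, z} \<subseteq> row_nbhd E r"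
      by (rule ecard_ge_3E)
    then show ?thesis
      by (rule has_H123_copy_of_full_row[OF E col_twins])
  next
    case col
    then obtain x y z where "distinct [x, y, z]" "{x, y, z} \<subseteq> row_nbhd (converse E) c"
      by (auto simp: row_nbhd_def col_nbhd_def elim: ecard_ge_3E)
    with E row_twins have "has_H123_copy C R (converse E)"
      by (intro has_H123_copy_of_full_row) auto
    then show ?thesis
      by (rule has_H123_copy_converse)
  qed
qed

definition orthogonal_mat :: "nat \<Rightarrow> (nat \<Rightarrow> nat \<Rightarrow> real) \<Rightarrow> bool" where
  "orthogonal_mat n N \<longleftrightarrow> (\<forall>k<n. \<forall>k'<n. (\<Sum>l<n. N l k * N l k') = (if k = k' then 1 else 0))"

lemma orthogonal_mat_preserves_norm:
  fixes w :: "nat \<Rightarrow> 'f::{real_normed_field,real_inner}"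
  assumes "orthogonal_mat n N"
  shows "(\<Sum>l<n. (norm (\<Sum>k<n. of_real (N l k) * w k))\<^sup>2) = (\<Sum>k<n. (norm (w k))\<^sup>2)"
proof -
  have expand: "(norm (\<Sum>k<n. of_real (N l k) * w k))\<^sup>2
      = (\<Sum>k<n. \<Sum>k'<n. (N l k * N l k') * inner (w k') (w k))" for l
    by (simp add: power2_norm_eq_inner inner_sum_left inner_sum_right
        scaleR_conv_of_real[symmetric] sum_distrib_left mult.assoc)
  have "(\<Sum>l<n. (norm (\<Sum>k<n. of_real (N l k) * w k))\<^sup>2)
      = (\<Sum>k<n. \<Sum>l<n. \<Sum>k'<n. (N l k * N l k') * inner (w k') (w k))"
    unfolding expand by (rule sum.swap)
  also have "\<dots> = (\<Sum>k<n. \<Sum>k'<n. (\<Sum>l<n. N l k * N l k') * inner (w k') (w k))"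
    by (rule sum.cong[OF refl trans[OF sum.swap]]) (simp add: sum_distrib_right)
  also have "\<dots> = (\<Sum>k<n. \<Sum>k'<n. if k' = k then inner (w k') (w k) else 0)"
    using assms by (intro sum.cong refl) (auto simp: orthogonal_mat_def)
  also have "\<dots> = (\<Sum>k<n. (norm (w k))\<^sup>2)"
    by (simp add: power2_norm_eq_inner)
  finally show ?thesis .
qed

lemma mat_opnorm_ge_test_vector:
  assumes "finite R0" "R0 \<subseteq> R" "finite C0" "C0 \<subseteq> C" "(\<Sum>j\<in>C0. (norm (x j))\<^sup>2) \<le> 1"
  shows "ereal (sqrt (\<Sum>i\<in>R0. (norm (\<Sum>j\<in>C0. A i j * x j))\<^sup>2)) \<le> mat_opnorm R C A"
  unfolding mat_opnorm_def by (rule SUP_upper2[of "(R0, C0, x)"]) (use assms in auto)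

lemma mat_opnorm_ge_norm_entry:
  assumes "i \<in> R" "j \<in> C"
  shows "ereal (norm (A i j)) \<le> mat_opnorm R C A"
  using mat_opnorm_ge_test_vector[of "{i}" R "{j}" C "\<lambda>_. 1" A] assms by simp

lemma schur_norm_ge_masked_contraction:
  fixes X :: "'a \<Rightarrow> 'b \<Rightarrow> 'f::real_normed_field"
  assumes "mat_opnorm R C X \<le> 1"
  shows "mat_opnorm R C (\<lambda>i j. if (i, j) \<in> E then X i j else 0) \<le> schur_norm TYPE('f) R C E"
  unfolding schur_norm_def by (rule SUP_upper2[of X]) (use assms in auto)

lemma mat_opnorm_transferred_orthogonal_le_1:
  fixes R R0 :: "'a set" and C C0 :: "'b set" and N :: "nat \<Rightarrow> nat \<Rightarrow> real"
  assumes bij_f: "bij_betw f R0 {..<n}" and bij_g: "bij_betw g C0 {..<n}"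
    and N: "orthogonal_mat n N"
  shows "mat_opnorm R C (\<lambda>i j. if i \<in> R0 \<and> j \<in> C0 then of_real (N (f i) (g j))
                                 else (0::'f::{real_normed_field,real_inner})) \<le> 1"
    (is "mat_opnorm R C ?X \<le> 1")
  unfolding mat_opnorm_def
proof (rule SUP_least, clarify)
  fix R1 :: "'a set" and C1 :: "'b set" and y :: "'b \<Rightarrow> 'f"
  assume fin: "finite R1" "finite C1" and y: "(\<Sum>j\<in>C1. (norm (y j))\<^sup>2) \<le> 1"
  have fin0: "finite R0" "finite C0"
    using bij_f bij_g bij_betw_finite by auto
  define w where "w k = (let j = inv_into C0 g k in if j \<in> C1 then y j else 0)" for k
  have w_g: "w (g j) = (if j \<in> C1 then y j else 0)" if "j \<in> C0" for j
    using bij_g that by (simp add: w_def bij_betw_inv_into_left)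
  have row: "(\<Sum>j\<in>C1. ?X i j * y j) = (\<Sum>k<n. of_real (N (f i) k) * w k)" if "i \<in> R0" for i
  proof -
    have "(\<Sum>j\<in>C1. ?X i j * y j) = (\<Sum>j\<in>C1 \<inter> C0. ?X i j * y j)"
      by (rule sum.mono_neutral_right) (auto simp: fin)
    also have "\<dots> = (\<Sum>j\<in>C0. if j \<in> C1 then ?X i j * y j else 0)"
      using sum.inter_restrict[OF fin0(2), of "\<lambda>j. ?X i j * y j" C1] by (simp add: Int_commute)
    also have "\<dots> = (\<Sum>j\<in>C0. of_real (N (f i) (g j)) * w (g j))"
      using that by (intro sum.cong refl) (simp add: w_g)
    also have "\<dots> = (\<Sum>k<n. of_real (N (f i) k) * w k)"
      by (rule sum.reindex_bij_betw[OF bij_g])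
    finally show ?thesis .
  qed
  have "(\<Sum>i\<in>R1. (norm (\<Sum>j\<in>C1. ?X i j * y j))\<^sup>2)
      = (\<Sum>i\<in>R1 \<inter> R0. (norm (\<Sum>j\<in>C1. ?X i j * y j))\<^sup>2)"
    by (rule sum.mono_neutral_right) (auto simp: fin)
  also have "\<dots> \<le> (\<Sum>i\<in>R0. (norm (\<Sum>j\<in>C1. ?X i j * y j))\<^sup>2)"
    by (rule sum_mono2) (auto simp: fin0)
  also have "\<dots> = (\<Sum>i\<in>R0. (norm (\<Sum>k<n. of_real (N (f i) k) * w k))\<^sup>2)"
    by (intro sum.cong refl arg_cong[where f = "\<lambda>t. (norm t)\<^sup>2"] row)
  also have "\<dots> = (\<Sum>l<n. (norm (\<Sum>k<n. of_real (N l k) * w k))\<^sup>2)"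
    by (rule sum.reindex_bij_betw[OF bij_f])
  also have "\<dots> = (\<Sum>k<n. (norm (w k))\<^sup>2)"
    by (rule orthogonal_mat_preserves_norm[OF N])
  also have "\<dots> = (\<Sum>j\<in>C0. (norm (w (g j)))\<^sup>2)"
    by (rule sum.reindex_bij_betw[OF bij_g, symmetric])
  also have "\<dots> = (\<Sum>j\<in>C0 \<inter> C1. (norm (y j))\<^sup>2)"
    using fin0 by (simp add: w_g sum.inter_restrict if_distrib[of "\<lambda>t. (norm t)\<^sup>2"] cong: if_cong)
  also have "\<dots> \<le> 1"
    using fin y by (meson Int_lower2 order_trans sum_mono2 zero_le_power2)
  finally show "ereal (sqrt (\<Sum>i\<in>R1. (norm (\<Sum>j\<in>C1. ?X i j * y j))\<^sup>2)) \<le> 1"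
    by simp
qed

definition schur_witness ::
    "nat \<Rightarrow> (nat \<Rightarrow> nat \<Rightarrow> bool) \<Rightarrow> real \<Rightarrow> (nat \<Rightarrow> nat \<Rightarrow> real) \<Rightarrow> (nat \<Rightarrow> real) \<Rightarrow> bool" where
  "schur_witness n P \<eta> N v \<longleftrightarrow> orthogonal_mat n N \<and> 0 < (\<Sum>k<n. (v k)\<^sup>2) \<and>
     \<eta>\<^sup>2 * (\<Sum>k<n. (v k)\<^sup>2) \<le> (\<Sum>l<n. (\<Sum>k<n. (if P l k then N l k else 0) * v k)\<^sup>2)"

lemma schur_witness_mono:
  assumes "schur_witness n P \<eta>' N v" "0 \<le> \<eta>" "\<eta> \<le> \<eta>'"
  shows "schur_witness n P \<eta> N v"
proof -
  have "\<eta>\<^sup>2 * (\<Sum>k<n. (v k)\<^sup>2) \<le> \<eta>'\<^sup>2 * (\<Sum>k<n. (v k)\<^sup>2)"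
    using assms(2,3) by (intro mult_right_mono power_mono sum_nonneg) auto
  then show ?thesis
    using assms(1) unfolding schur_witness_def by linarith
qed

lemma schur_norm_ge_of_witness:
  fixes R R0 :: "'a set" and C C0 :: "'b set"
  assumes sub: "R0 \<subseteq> R" "C0 \<subseteq> C"
    and bij_f: "bij_betw f R0 {..<n}" and bij_g: "bij_betw g C0 {..<n}"
    and adj: "\<forall>r\<in>R0. \<forall>c\<in>C0. (r, c) \<in> E \<longleftrightarrow> P (f r) (g c)"
    and wit: "schur_witness n P \<eta> N v" and "0 \<le> \<eta>"
  shows "ereal \<eta> \<le> schur_norm TYPE('f::{real_normed_field,real_inner}) R C E"
proof -
  define X :: "'a \<Rightarrow> 'b \<Rightarrow> 'f" where
    "X i j = (if i \<in> R0 \<and> j \<in> C0 then of_real (N (f i) (g j)) else 0)" for i j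
  define M where "M l k = (if P l k then N l k else 0)" for l k
  define S where "S = (\<Sum>k<n. (v k)\<^sup>2)"
  define y :: "'b \<Rightarrow> 'f" where "y j = of_real (v (g j) / sqrt S)" for j
  have fin: "finite R0" "finite C0"
    using bij_f bij_g bij_betw_finite by auto
  have "S > 0" and val: "\<eta>\<^sup>2 * S \<le> (\<Sum>l<n. (\<Sum>k<n. M l k * v k)\<^sup>2)"
    using wit by (simp_all add: schur_witness_def S_def M_def)
  have y: "(\<Sum>j\<in>C0. (norm (y j))\<^sup>2) = 1"
  proof -
    have "(\<Sum>j\<in>C0. (norm (y j))\<^sup>2) = (\<Sum>j\<in>C0. (v (g j))\<^sup>2 / S)"
      using \<open>S > 0\<close>
      by (intro sum.cong refl) (simp only: y_def norm_of_real power2_abs, simp add: power_divide)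
    also have "\<dots> = (\<Sum>k<n. (v k)\<^sup>2) / S"
      unfolding sum_divide_distrib by (rule sum.reindex_bij_betw[OF bij_g])
    finally show ?thesis
      using \<open>S > 0\<close> by (simp add: S_def)
  qed
  have row: "(\<Sum>j\<in>C0. (if (i, j) \<in> E then X i j else 0) * y j)
      = of_real ((\<Sum>k<n. M (f i) k * v k) / sqrt S)" if "i \<in> R0" for i
  proof -
    have "(\<Sum>j\<in>C0. (if (i, j) \<in> E then X i j else 0) * y j)
        = (\<Sum>j\<in>C0. of_real (M (f i) (g j) * v (g j) / sqrt S))"
      using adj that by (intro sum.cong refl) (simp add: X_def y_def M_def)
    also have "\<dots> = (\<Sum>k<n. of_real (M (f i) k * v k / sqrt S))"
      by (rule sum.reindex_bij_betw[OF bij_g])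
    finally show ?thesis
      by (simp add: sum_divide_distrib)
  qed
  have "(\<Sum>i\<in>R0. (norm (\<Sum>j\<in>C0. (if (i, j) \<in> E then X i j else 0) * y j))\<^sup>2)
      = (\<Sum>i\<in>R0. (\<Sum>k<n. M (f i) k * v k)\<^sup>2 / S)"
    using \<open>S > 0\<close> by (intro sum.cong refl) (simp only: row norm_of_real power2_abs power_divide, simp)
  also have "\<dots> = (\<Sum>l<n. (\<Sum>k<n. M l k * v k)\<^sup>2) / S"
    unfolding sum_divide_distrib by (rule sum.reindex_bij_betw[OF bij_f])
  finally have "\<eta>\<^sup>2 \<le> (\<Sum>i\<in>R0. (norm (\<Sum>j\<in>C0. (if (i, j) \<in> E then X i j else 0) * y j))\<^sup>2)"
    using val \<open>S > 0\<close> by (simp add: pos_le_divide_eq)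
  then have "ereal \<eta> \<le> ereal (sqrt (\<Sum>i\<in>R0. (norm (\<Sum>j\<in>C0. (if (i, j) \<in> E then X i j else 0) * y j))\<^sup>2))"
    using \<open>0 \<le> \<eta>\<close> by (simp add: real_le_rsqrt)
  also have "\<dots> \<le> mat_opnorm R C (\<lambda>i j. if (i, j) \<in> E then X i j else 0)"
    by (rule mat_opnorm_ge_test_vector) (use fin sub y in auto)
  also have "\<dots> \<le> schur_norm TYPE('f) R C E"
    by (rule schur_norm_ge_masked_contraction) (use mat_opnorm_transferred_orthogonal_le_1[OF bij_f bij_g] wit in
        \<open>auto simp: X_def schur_witness_def\<close>)
  finally show ?thesis .
qed

lemma schur_norm_ge_of_induced_copy:
  assumes "has_induced_copy R C E P"
    and "schur_witness 3 P \<eta> N v" and "schur_witness 3 (\<lambda>l k. P k l) \<eta> N' v'" and "0 \<le> \<eta>"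
  shows "ereal \<eta> \<le> schur_norm TYPE('f::{real_normed_field,real_inner}) R C E"
proof -
  obtain R0 C0 f g where sub: "R0 \<subseteq> R" "C0 \<subseteq> C"
    and bij: "bij_betw f R0 {..<3}" "bij_betw g C0 {..<3}"
    and adj: "(\<forall>r\<in>R0. \<forall>c\<in>C0. (r, c) \<in> E \<longleftrightarrow> P (f r) (g c)) \<or>
         (\<forall>r\<in>R0. \<forall>c\<in>C0. (r, c) \<in> E \<longleftrightarrow> (\<lambda>l k. P k l) (f r) (g c))"
    using assms(1) unfolding has_induced_copy_def by auto
  from adj show ?thesis
  proof
    assume "\<forall>r\<in>R0. \<forall>c\<in>C0. (r, c) \<in> E \<longleftrightarrow> P (f r) (g c)"
    then show ?thesis
      by (rule schur_norm_ge_of_witness[OF sub bij _ assms(2,4)])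
  next
    assume "\<forall>r\<in>R0. \<forall>c\<in>C0. (r, c) \<in> E \<longleftrightarrow> (\<lambda>l k. P k l) (f r) (g c)"
    then show ?thesis
      by (rule schur_norm_ge_of_witness[OF sub bij _ assms(3,4)])
  qed
qed

definition mat3 :: "'x \<Rightarrow> 'x \<Rightarrow> 'x \<Rightarrow> 'x \<Rightarrow> 'x \<Rightarrow> 'x \<Rightarrow> 'x \<Rightarrow> 'x \<Rightarrow> 'x \<Rightarrow> nat \<Rightarrow> nat \<Rightarrow> 'x" where
  "mat3 x00 x01 x02 x10 x11 x12 x20 x21 x22 l k = [[x00, x01, x02], [x10, x11, x12], [x20, x21, x22]] ! l ! k"

definition vec3 :: "'x \<Rightarrow> 'x \<Rightarrow> 'x \<Rightarrow> nat \<Rightarrow> 'x" where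
  "vec3 x0 x1 x2 k = [x0, x1, x2] ! k"

lemma sum_lessThan_3: "(\<Sum>k::nat<3. h k) = h 0 + h 1 + (h 2 :: 'x::comm_monoid_add)"
  by (simp add: numeral_3_eq_3 numeral_2_eq_2 add.commute add.left_commute)

lemma orthogonal_mat3I:
  fixes x00 x01 x02 x10 x11 x12 x20 x21 x22 :: real
  assumes "x00 * x00 + x10 * x10 + x20 * x20 = 1" "x01 * x01 + x11 * x11 + x21 * x21 = 1"
    "x02 * x02 + x12 * x12 + x22 * x22 = 1" "x00 * x01 + x10 * x11 + x20 * x21 = 0"
    "x00 * x02 + x10 * x12 + x20 * x22 = 0" "x01 * x02 + x11 * x12 + x21 * x22 = 0"
  shows "orthogonal_mat 3 (mat3 x00 x01 x02 x10 x11 x12 x20 x21 x22)"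
  using assms unfolding orthogonal_mat_def less_3_iff
  by (auto simp: sum_lessThan_3 mat3_def algebra_simps)

lemma eta4_nonneg: "0 \<le> eta4"
  by (simp add: eta4_def)

lemma eta4_le_sqrt_3_2: "eta4 \<le> sqrt (3 / 2)"
proof -
  have "sqrt 19 \<le> sqrt ((22 / 5)\<^sup>2)"
    by (rule real_sqrt_le_mono) (simp add: power2_eq_square)
  then have "sqrt 19 \<le> 22 / 5"
    by simp
  then have "eta4\<^sup>2 \<le> 3 / 2"
    by (simp add: eta4_def power_divide)
  then show ?thesis
    using eta4_nonneg real_le_rsqrt by blast
qed

lemma schur_norm_ge_eta4_if_H2_copy:
  assumes "has_induced_copy R C E H2"
  shows "ereal eta4 \<le> schur_norm TYPE('f::{real_normed_field,real_inner}) R C E"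
proof (rule schur_norm_ge_of_induced_copy[OF assms _ _ eta4_nonneg])
  show "schur_witness 3 H2 eta4
      (mat3 (21/29) (12/29) (16/29) (12/29) (11/29) (-24/29) (-16/29) (24/29) (3/29)) (vec3 11 14 (-9))"
    by (rule schur_witness_mono[OF _ eta4_nonneg eta4_le_sqrt_3_2])
      (auto intro!: orthogonal_mat3I simp: schur_witness_def sum_lessThan_3 mat3_def vec3_def H2_def power2_eq_square)
  show "schur_witness 3 (\<lambda>l k. H2 k l) eta4
      (mat3 (21/29) (12/29) (-16/29) (12/29) (11/29) (24/29) (16/29) (-24/29) (3/29)) (vec3 11 14 9)"
    by (rule schur_witness_mono[OF _ eta4_nonneg eta4_le_sqrt_3_2])
      (auto intro!: orthogonal_mat3I simp: schur_witness_def sum_lessThan_3 mat3_def vec3_def H2_def power2_eq_square)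
qed

lemma schur_norm_ge_eta4_if_H3_copy:
  assumes "has_induced_copy R C E H3"
  shows "ereal eta4 \<le> schur_norm TYPE('f::{real_normed_field,real_inner}) R C E"
proof (rule schur_norm_ge_of_induced_copy[OF assms _ _ eta4_nonneg])
  show "schur_witness 3 H3 eta4
      (mat3 (8/17) (-12/17) (9/17) (12/17) (-1/17) (-12/17) (9/17) (12/17) (8/17)) (vec3 (-11) 13 11)"
    by (rule schur_witness_mono[OF _ eta4_nonneg eta4_le_sqrt_3_2])
      (auto intro!: orthogonal_mat3I simp: schur_witness_def sum_lessThan_3 mat3_def vec3_def H3_def power2_eq_square)
  show "schur_witness 3 (\<lambda>l k. H3 k l) eta4
      (mat3 (8/17) (12/17) (9/17) (-12/17) (-1/17) (12/17) (9/17) (-12/17) (8/17)) (vec3 11 13 (-11))"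
    by (rule schur_witness_mono[OF _ eta4_nonneg eta4_le_sqrt_3_2])
      (auto intro!: orthogonal_mat3I simp: schur_witness_def sum_lessThan_3 mat3_def vec3_def H3_def power2_eq_square)
qed

lemma orthogonal_mat3_symmetric_family:
  fixes a b c d :: real
  assumes "a + c = 1" "d = a - c" "b * b = 2 * a * c"
  shows "orthogonal_mat 3 (mat3 (-a) b (-c) b d (-b) (-c) (-b) (-a))"
  using assms by (intro orthogonal_mat3I; algebra)

text \<open>Both identities have the factor t^2 - 19: at t = \<surd>19 the two H1 witnesses below attain
  eta4 exactly.\<close>

lemma H1_rows_identity:
  fixes t :: real
  shows "(169 + 38*t) * (2*(74 - 2*t)*(1 + 2*t)^2 + (26*t - 62)^2)
    - (2*(8 + t)^2*(74 - 2*t)*(1 + 2*t)^2 + (1 + 2*t)^2*(2*(74 - 2*t) + (26*t - 62))^2)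
    = (t*t - 19) * (-34620 + 19324*t - 2864*t^2 + 16*t^3)"
  by algebra

lemma H1_cols_identity:
  fixes t :: real
  shows "(169 + 38*t) * (2*(8 + t)^2*(74 - 2*t)*(1 + 2*t)^2 + (1 + 2*t)^2*(2*(74 - 2*t) + (26*t - 62))^2)
    - (2*(74 - 2*t)*(1 + 2*t)^2*((8 + t)^2 + 2*(74 - 2*t) + (26*t - 62))^2
       + (1 + 2*t)^4*(2*(74 - 2*t) + (26*t - 62))^2)
    = (t*t - 19) * (25616 + 102104*t + 99092*t^2 - 9164*t^3 - 7712*t^4 + 16*t^5)"
  by algebra

lemma H1_schur_witnesses:
  defines "t \<equiv> sqrt 19"
  defines "a \<equiv> (8 + t) / 15" and "c \<equiv> (7 - t) / 15" and "d \<equiv> (1 + 2 * t) / 15"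
    and "b \<equiv> sqrt ((74 - 2 * t) / 225)" and "\<mu> \<equiv> (26 * t - 62) / 225"
  defines "N \<equiv> mat3 (-a) b (-c) b d (-b) (-c) (-b) (-a)"
  shows "schur_witness 3 H1 eta4 N (vec3 (b * d) \<mu> (- (b * d)))"
    and "schur_witness 3 (\<lambda>l k. H1 k l) eta4 N (vec3 (- (a * b * d)) (d * (2 * (b * b) + \<mu>)) (a * b * d))"
proof -
  have t: "t * t = 19" "0 < t" "t \<le> 22 / 5"
  proof -
    have "sqrt 19 \<le> sqrt ((22 / 5)\<^sup>2)"
      by (rule real_sqrt_le_mono) (simp add: power2_eq_square)
    then show "t \<le> 22 / 5"
      by (simp add: t_def)
  qed (simp_all add: t_def)
  have b: "b * b = (74 - 2 * t) / 225" "0 < b * b"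
    using t by (simp_all add: b_def)
  have "0 < a" "0 < d"
    using t by (simp_all add: a_def d_def)
  have eta4: "eta4\<^sup>2 = (169 + 38 * t) / 225"
    by (simp add: eta4_def t_def power_divide)
  have "b * b = 2 * a * c"
    using b t by (simp add: a_def c_def field_simps)
  then have orth: "orthogonal_mat 3 N"
    unfolding N_def by (rule orthogonal_mat3_symmetric_family[rotated 2]) (simp_all add: a_def c_def d_def field_simps)
  have bd: "0 < (b * d)\<^sup>2"
    using b(2) \<open>0 < d\<close> by (auto simp: zero_less_power2)
  \<comment> \<open>N is symmetric, so the transposed pattern is handled by the same N applied to the image
    vector ?u = (H1 \<circ> N) ?v.\<close>
  let ?v = "vec3 (b * d) \<mu> (- (b * d))"
  let ?u = "vec3 (- (a * b * d)) (d * (2 * (b * b) + \<mu>)) (a * b * d)"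
  have norm_v: "(\<Sum>k<3. (?v k)\<^sup>2) = 2 * (b * b) * d\<^sup>2 + \<mu>\<^sup>2"
    by (simp add: sum_lessThan_3 vec3_def power2_eq_square algebra_simps)
  have image_v: "(\<Sum>l<3. (\<Sum>k<3. (if H1 l k then N l k else 0) * ?v k)\<^sup>2) = (\<Sum>k<3. (?u k)\<^sup>2)"
    by (simp add: N_def sum_lessThan_3 H1_def mat3_def vec3_def power2_eq_square algebra_simps)
  have norm_u: "(\<Sum>k<3. (?u k)\<^sup>2) = 2 * a\<^sup>2 * (b * b) * d\<^sup>2 + d\<^sup>2 * (2 * (b * b) + \<mu>)\<^sup>2"
    by (simp add: sum_lessThan_3 vec3_def power2_eq_square algebra_simps)
  have image_u: "(\<Sum>l<3. (\<Sum>k<3. (if H1 k l then N l k else 0) * ?u k)\<^sup>2)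
      = 2 * (b * b) * (a\<^sup>2 * d + d * (2 * (b * b) + \<mu>))\<^sup>2 + d\<^sup>2 * (d * (2 * (b * b) + \<mu>))\<^sup>2"
    by (simp add: N_def sum_lessThan_3 H1_def mat3_def vec3_def power2_eq_square algebra_simps)
  have "eta4\<^sup>2 * (2 * (b * b) * d\<^sup>2 + \<mu>\<^sup>2)
      = (169 + 38*t) * (2*(74 - 2*t)*(1 + 2*t)^2 + (26*t - 62)^2) / 225^3"
    unfolding eta4 b(1) by (simp add: d_def \<mu>_def field_simps)
  also have "\<dots> = (2*(8 + t)^2*(74 - 2*t)*(1 + 2*t)^2 + (1 + 2*t)^2*(2*(74 - 2*t) + (26*t - 62))^2) / 225^3"
    using H1_rows_identity[of t] t(1) by simp
  also have "\<dots> = 2 * a\<^sup>2 * (b * b) * d\<^sup>2 + d\<^sup>2 * (2 * (b * b) + \<mu>)\<^sup>2"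
    unfolding b(1) by (simp add: a_def d_def \<mu>_def field_simps power2_eq_square)
  finally have rows: "eta4\<^sup>2 * (2 * (b * b) * d\<^sup>2 + \<mu>\<^sup>2) = 2 * a\<^sup>2 * (b * b) * d\<^sup>2 + d\<^sup>2 * (2 * (b * b) + \<mu>)\<^sup>2" .
  have "eta4\<^sup>2 * (2 * a\<^sup>2 * (b * b) * d\<^sup>2 + d\<^sup>2 * (2 * (b * b) + \<mu>)\<^sup>2)
      = (169 + 38*t) * (2*(8 + t)^2*(74 - 2*t)*(1 + 2*t)^2 + (1 + 2*t)^2*(2*(74 - 2*t) + (26*t - 62))^2) / 225^4"
    unfolding eta4 b(1) by (simp add: a_def d_def \<mu>_def field_simps power2_eq_square)
  also have "\<dots> = (2*(74 - 2*t)*(1 + 2*t)^2*((8 + t)^2 + 2*(74 - 2*t) + (26*t - 62))^2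
       + (1 + 2*t)^4*(2*(74 - 2*t) + (26*t - 62))^2) / 225^4"
    using H1_cols_identity[of t] t(1) by simp
  also have "\<dots> = 2 * (b * b) * (a\<^sup>2 * d + d * (2 * (b * b) + \<mu>))\<^sup>2 + d\<^sup>2 * (d * (2 * (b * b) + \<mu>))\<^sup>2"
    unfolding b(1) by (simp add: a_def d_def \<mu>_def field_simps power2_eq_square power4_eq_xxxx)
  finally have cols: "eta4\<^sup>2 * (2 * a\<^sup>2 * (b * b) * d\<^sup>2 + d\<^sup>2 * (2 * (b * b) + \<mu>)\<^sup>2)
      = 2 * (b * b) * (a\<^sup>2 * d + d * (2 * (b * b) + \<mu>))\<^sup>2 + d\<^sup>2 * (d * (2 * (b * b) + \<mu>))\<^sup>2" .
  have "0 < 2 * (b * b) * d\<^sup>2" "0 < 2 * a\<^sup>2 * (b * b) * d\<^sup>2"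
    using b(2) \<open>0 < a\<close> \<open>0 < d\<close> by simp_all
  then show "schur_witness 3 H1 eta4 N ?v" "schur_witness 3 (\<lambda>l k. H1 k l) eta4 N ?u"
    unfolding schur_witness_def norm_v image_v norm_u image_u
    using orth rows cols by (simp_all add: add_pos_nonneg)
qed

lemma schur_norm_ge_eta4_if_H123_copy:
  assumes "has_H123_copy R C E"
  shows "ereal eta4 \<le> schur_norm TYPE('f::{real_normed_field,real_inner}) R C E"
  using assms unfolding has_H123_copy_def
proof (elim disjE)
  assume "has_induced_copy R C E H1"
  then show ?thesis
    by (rule schur_norm_ge_of_induced_copy[OF _ H1_schur_witnesses eta4_nonneg])
qed (fact schur_norm_ge_eta4_if_H2_copy schur_norm_ge_eta4_if_H3_copy)+

lemma sum_eq_single: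
  assumes "finite A" "a \<in> A" "\<And>x. x \<in> A \<Longrightarrow> x \<noteq> a \<Longrightarrow> g x = 0"
  shows "sum g A = g a"
  using sum.mono_neutral_left[of A "{a}" g] assms by auto

lemma ecard_le_1_imp_eq:
  assumes "ecard S \<le> 1" "x \<in> S" "y \<in> S"
  shows "x = y"
proof -
  have "finite S" "card S \<le> 1"
    using assms(1) by (auto simp: ecard_def one_enat_def split: if_splits)
  then show ?thesis
    using assms(2,3) card_le_Suc0_iff_eq by auto
qed

lemma mat_opnorm_le_1_if_partial_matching:
  fixes Z :: "'a \<Rightarrow> 'b \<Rightarrow> 'f::real_normed_field" and M :: "('a \<times> 'b) set"
  assumes entry: "\<And>i j. norm (Z i j) \<le> 1" and support: "\<And>i j. (i, j) \<notin> M \<Longrightarrow> Z i j = 0"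
    and row_unique: "\<And>i j j'. (i, j) \<in> M \<Longrightarrow> (i, j') \<in> M \<Longrightarrow> j = j'"
    and col_unique: "\<And>i i' j. (i, j) \<in> M \<Longrightarrow> (i', j) \<in> M \<Longrightarrow> i = i'"
  shows "mat_opnorm R C Z \<le> 1"
  unfolding mat_opnorm_def
proof (rule SUP_least, clarify)
  fix R1 :: "'a set" and C1 :: "'b set" and y :: "'b \<Rightarrow> 'f"
  assume fin: "finite R1" "finite C1" and y: "(\<Sum>j\<in>C1. (norm (y j))\<^sup>2) \<le> 1"
  have row: "(norm (\<Sum>j\<in>C1. Z i j * y j))\<^sup>2 \<le> (\<Sum>j\<in>C1. if (i, j) \<in> M then (norm (y j))\<^sup>2 else 0)" for i
  proof (cases "\<exists>j0\<in>C1. (i, j0) \<in> M")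
    case True
    then obtain j0 where j0: "j0 \<in> C1" "(i, j0) \<in> M"
      by blast
    have "(\<Sum>j\<in>C1. Z i j * y j) = Z i j0 * y j0"
      using j0 by (subst sum_eq_single[OF fin(2) j0(1)]) (auto intro!: support dest: row_unique)
    moreover have "(\<Sum>j\<in>C1. if (i, j) \<in> M then (norm (y j))\<^sup>2 else 0) = (norm (y j0))\<^sup>2"
      using row_unique j0 by (subst sum_eq_single[OF fin(2) j0(1)]) auto
    ultimately show ?thesis
      using entry[of i j0] by (simp add: norm_mult power_mult_distrib mult_left_le_one_le power_le_one)
  next
    case False
    then show ?thesis
      by (simp add: support sum_nonneg)
  qed
  have col: "(\<Sum>i\<in>R1. if (i, j) \<in> M then (norm (y j))\<^sup>2 else 0) \<le> (norm (y j))\<^sup>2" for j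
  proof (cases "\<exists>i0\<in>R1. (i0, j) \<in> M")
    case True
    then obtain i0 where "i0 \<in> R1" "(i0, j) \<in> M"
      by blast
    then show ?thesis
      using col_unique by (subst sum_eq_single[OF fin(1)]) auto
  qed simp
  have "(\<Sum>i\<in>R1. (norm (\<Sum>j\<in>C1. Z i j * y j))\<^sup>2)
      \<le> (\<Sum>i\<in>R1. \<Sum>j\<in>C1. if (i, j) \<in> M then (norm (y j))\<^sup>2 else 0)"
    by (intro sum_mono row)
  also have "\<dots> = (\<Sum>j\<in>C1. \<Sum>i\<in>R1. if (i, j) \<in> M then (norm (y j))\<^sup>2 else 0)"
    by (rule sum.swap)
  also have "\<dots> \<le> (\<Sum>j\<in>C1. (norm (y j))\<^sup>2)"
    by (intro sum_mono col)
  also have "\<dots> \<le> 1"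
    by (rule y)
  finally show "ereal (sqrt (\<Sum>i\<in>R1. (norm (\<Sum>j\<in>C1. Z i j * y j))\<^sup>2)) \<le> 1"
    by simp
qed

lemma schur_norm_le_1_if_degrees_le_1:
  assumes E: "E \<subseteq> R \<times> C" and deg: "\<forall>d\<in>degrees R C E. d \<le> 1"
  shows "schur_norm TYPE('f::real_normed_field) R C E \<le> 1"
  unfolding schur_norm_def
proof (rule SUP_least)
  fix X :: "'a \<Rightarrow> 'b \<Rightarrow> 'f"
  assume "X \<in> {X. mat_opnorm R C X \<le> 1}"
  then have "mat_opnorm R C X \<le> 1"
    by simp
  then have entry: "norm (X i j) \<le> 1" if "(i, j) \<in> E" for i j
  proof -
    have "ereal (norm (X i j)) \<le> mat_opnorm R C X"
      using that E by (intro mat_opnorm_ge_norm_entry) auto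
    also note \<open>mat_opnorm R C X \<le> 1\<close>
    finally show ?thesis
      by simp
  qed
  show "mat_opnorm R C (\<lambda>i j. if (i, j) \<in> E then X i j else 0) \<le> 1"
  proof (rule mat_opnorm_le_1_if_partial_matching[where M = E])
    show "j = j'" if "(i, j) \<in> E" "(i, j') \<in> E" for i j j'
      using that E deg ecard_le_1_imp_eq[of "row_nbhd E i"]
      by (force simp: degrees_def row_nbhd_def)
    show "i = i'" if "(i, j) \<in> E" "(i', j) \<in> E" for i i' j
      using that E deg ecard_le_1_imp_eq[of "col_nbhd E j"]
      by (force simp: degrees_def col_nbhd_def)
  qed (simp_all add: entry)
qed

lemma max_deg_eq_2_if_schur_norm_between:
  assumes "bip_graph R C E" "twin_free R C E"
    and lower: "1 < schur_norm TYPE('f::{real_normed_field,real_inner}) R C E"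
    and upper: "schur_norm TYPE('f) R C E < ereal eta4"
  shows "max_deg R C E = 2"
proof -
  have E: "E \<subseteq> R \<times> C"
    using assms(1) by (simp add: bip_graph_def)
  have "\<not> (\<exists>d\<in>degrees R C E. 3 \<le> d)"
  proof
    assume "\<exists>d\<in>degrees R C E. 3 \<le> d"
    then have "ereal eta4 \<le> schur_norm TYPE('f) R C E"
      by (intro schur_norm_ge_eta4_if_H123_copy has_H123_copy_if_degree_ge_3[OF assms(1,2)])
    with upper show False
      by simp
  qed
  then have le_2: "d \<le> 2" if "d \<in> degrees R C E" for d
    using that by (cases d) (auto simp: numeral_eq_enat)
  have "2 \<in> degrees R C E"
  proof (rule ccontr)
    assume "2 \<notin> degrees R C E"
    have "\<forall>d\<in>degrees R C E. d \<le> 1"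
    proof
      fix d assume "d \<in> degrees R C E"
      with le_2 \<open>2 \<notin> degrees R C E\<close> have "d \<le> 2" "d \<noteq> 2"
        by auto
      then show "d \<le> 1"
        by (cases d) (auto simp: one_enat_def numeral_eq_enat)
    qed
    then have "schur_norm TYPE('f) R C E \<le> 1"
      by (rule schur_norm_le_1_if_degrees_le_1[OF E])
    with lower show False
      by simp
  qed
  then show ?thesis
    unfolding max_deg_def using le_2 by (intro antisym Sup_least Sup_upper)
qed

theorem lemma6p3:
  fixes R :: "'a set" and C :: "'b set" and E :: "('a \<times> 'b) set"
  assumes "bip_graph R C E" and "twin_free R C E"
  shows "((\<exists>d\<in>degrees R C E. d \<ge> 3) \<longrightarrow>
            has_induced_copy R C E H1 \<or> has_induced_copy R C E H2 \<or> has_induced_copy R C E H3)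
       \<and> (1 < schur_norm TYPE(real) R C E \<and> schur_norm TYPE(real) R C E < ereal eta4
            \<longrightarrow> max_deg R C E = 2)
       \<and> (1 < schur_norm TYPE(complex) R C E \<and> schur_norm TYPE(complex) R C E < ereal eta4
            \<longrightarrow> max_deg R C E = 2)"
proof (intro conjI impI)
  assume "\<exists>d\<in>degrees R C E. d \<ge> 3"
  then show "has_induced_copy R C E H1 \<or> has_induced_copy R C E H2 \<or> has_induced_copy R C E H3"
    using has_H123_copy_if_degree_ge_3[OF assms] unfolding has_H123_copy_def by blast
next
  assume "1 < schur_norm TYPE(real) R C E \<and> schur_norm TYPE(real) R C E < ereal eta4"
  then show "max_deg R C E = 2"
    by (elim conjE) (rule max_deg_eq_2_if_schur_norm_between[OF assms])
next
  assume "1 < schur_norm TYPE(complex) R C E \<and> schur_norm TYPE(complex) R C E < ereal eta4"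
  then show "max_deg R C E = 2"
    by (elim conjE) (rule max_deg_eq_2_if_schur_norm_between[OF assms])
qed

end
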